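(* Let $\boldsymbol{\xi}_n \sim \mathrm{GP}(m_n,k_n)$ be a Gaussian process on a set $\mathcal{X}$ (the posterior after $n$ noisy observations), let $\tau^2\geq 0$ be the observation noise variance, and fix $\boldsymbol{x},\boldsymbol{x}'\in\mathcal{X}$ with $k_n(\boldsymbol{x},\boldsymbol{x})+\tau^2>0$. Suppose the next observation is made at $\boldsymbol{x}_{n+1}=\boldsymbol{x}$, with value $Z_{n+1} = m_n(\boldsymbol{x}) + \sqrt{k_n(\boldsymbol{x},\boldsymbol{x})+\tau^2}\,V$, $V\sim\mathcal{N}(0,1)$, and let $\boldsymbol{\xi}_{n+1}\sim\mathrm{GP}(m_{n+1},k_{n+1})$ be the GP updated by this observation, so that $\xi_{n+1}(\boldsymbol{x}')\sim\mathcal{N}(m_{n+1}(\boldsymbol{x}'),k_{n+1}(\boldsymbol{x}',\boldsymbol{x}'))$ with $$m_{n+1}(\boldsymbol{x}') = m_n(\boldsymbol{x}') + \alpha_n V,\quad \alpha_n = \frac{k_n(\boldsymbol{x},\boldsymbol{x}')}{\sqrt{k_n(\boldsymbol{x},\boldsymbol{x})+\tau^2}},\quad \sigma_{n+1}^2 := k_{n+1}(\boldsymbol{x}',\boldsymbol{x}') = k_n(\boldsymbol{x}',\boldsymbol{x}') - \frac{k_n(\boldsymbol{x},\boldsymbol{x}')^2}{k_n(\boldsymbol{x},\boldsymbol{x})+\tau^2},$$ and assume $\sigma_{n+1}>0$. Write $\mu_n = m_n(\boldsymbol{x}')$ and let $\mathbb{E}_{n,\boldsymbol{x}}$ denote expectation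 over $V$. Let $t\in\mathbb{R}$. (i) For $\mathrm{d}\gamma_1(u)=\mathbb{1}\{t\leq u\}\,\mathrm{d}\lambda(u)$, $$\mathbb{E}_{n,\boldsymbol{x}}\left[\mathrm{CRPS}_{\gamma_1}(\xi_{n+1}(\boldsymbol{x}'))\right] = \sigma_{n+1}\,\mathbb{E}\left[\left(N - \max\left(\tilde N, \frac{t-\mu_n-\alpha_n V}{\sigma_{n+1}}\right)\right)_+\right],$$ with $N,\tilde N, V$ i.i.d. $\mathcal{N}(0,1)$. (ii) For $\sigma_\gamma>0$ and $\mathrm{d}\gamma_2(u)=\frac{1}{\sigma_\gamma}\phi\!\left(\frac{u-t}{\sigma_\gamma}\right)\mathrm{d}\lambda(u)$, $$\mathbb{E}_{n,\boldsymbol{x}}\left[\mathrm{CRPS}_{\gamma_2}(\xi_{n+1}(\boldsymbol{x}'))\right] = \Phi\!\left(\begin{pmatrix}0\\0\end{pmatrix}; \begin{pmatrix}\mu_n-t\\ t-\mu_n\end{pmatrix}, \begin{pmatrix}\sigma_{n+1}^2+\alpha_n^2+\sigma_\gamma^2 & -\alpha_n^2-\sigma_\gamma^2\\ -\alpha_n^2-\sigma_\gamma^2 & \sigma_{n+1}^2+\alpha_n^2+\sigma_\gamma^2\end{pmatrix}\right).$$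
   Context: $\lambda$ is Lebesgue measure on $\mathbb{R}$; $\phi$, $\Phi$ are the standard normal density and CDF; $\Phi(\cdot;\boldsymbol{\mu},\boldsymbol{\Sigma})$ is the bivariate Gaussian CDF with mean $\boldsymbol{\mu}$ and covariance $\boldsymbol{\Sigma}$; $(a)_+=\max(a,0)$. For a CDF $F$, a Borel measure $\gamma$ and $y\in\mathbb{R}$, $\mathrm{CRPS}_\gamma(F,y) = \int[F(u)-\mathbb{1}\{y\leq u\}]^2\,\mathrm{d}\gamma(u)$, and the expected threshold-weighted CRPS is $\mathrm{CRPS}_\gamma(F) = \int \mathrm{CRPS}_\gamma(F,y')\,\mathrm{d}F(y')$; for a Gaussian random variable, $\mathrm{CRPS}_\gamma$ of it means $\mathrm{CRPS}_\gamma$ of its CDF. Here $\mathrm{CRPS}_\gamma(\xi_{n+1}(\boldsymbol{x}'))$ is computed for the Gaussian $\mathcal{N}(m_{n+1}(\boldsymbol{x}'),\sigma_{n+1}^2)$ given $V$, and then averaged over $V$. *)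

theory Defs
  imports "HOL-Probability.Probability"
begin

definition gauss :: "real \<Rightarrow> real \<Rightarrow> real measure" where
  "gauss mu s = density lborel (normal_density mu s)"

definition CRPS :: "real measure \<Rightarrow> (real \<Rightarrow> real) \<Rightarrow> real \<Rightarrow> ennreal" where
  "CRPS \<gamma> F y = (\<integral>\<^sup>+ u. ennreal ((F u - indicator {y..} u)\<^sup>2) \<partial>\<gamma>)"

definition expected_CRPS :: "real measure \<Rightarrow> real measure \<Rightarrow> ennreal" where
  "expected_CRPS \<gamma> M = (\<integral>\<^sup>+ y'. CRPS \<gamma> (cdf M) y' \<partial>M)"

definition bivariate_normal_density ::
  "real \<Rightarrow> real \<Rightarrow> real \<Rightarrow> real \<Rightarrow> real \<Rightarrow> real \<times> real \<Rightarrow> real" where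
  "bivariate_normal_density m1 m2 s11 s12 s22 p =
     (let D = s11 * s22 - s12\<^sup>2; a = fst p - m1; b = snd p - m2 in
      exp (- (s22 * a\<^sup>2 - 2 * s12 * a * b + s11 * b\<^sup>2) / (2 * D)) / (2 * pi * sqrt D))"

definition bivariate_Phi ::
  "real \<times> real \<Rightarrow> real \<Rightarrow> real \<Rightarrow> real \<Rightarrow> real \<Rightarrow> real \<Rightarrow> real" where
  "bivariate_Phi z m1 m2 s11 s12 s22 =
     measure (density (lborel \<Otimes>\<^sub>M lborel) (bivariate_normal_density m1 m2 s11 s12 s22))
       ({..fst z} \<times> {..snd z})"

end

theory Submission
  imports Defs
begin

(*
  Integrating out the observation y ~ F in the threshold-weighted CRPS leaves
  \<integral> F (1 - F) d\<gamma>, since \<integral> (F u - 1{y \<le> u})^2 dF(y) = F u (1 - F u).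

  (i) For \<gamma> = Lebesgue measure on [t, \<infinity>) and F = N(m, \<sigma>^2), the substitution u = m + \<sigma> x
  gives \<sigma> \<integral> over [(t - m) / \<sigma>, \<infinity>) of \<Phi> (1 - \<Phi>), and for any c this integral equals
  E (N - max N' c)_+, because (n - max n' c)_+ is the length of {u \<ge> c. n' \<le> u < n}.

  (ii) For \<gamma> = N(t, \<sigma>\<^sub>\<gamma>^2), moving the predictive mean by \<alpha> V and averaging over V
  convolves \<gamma> with N(0, \<alpha>^2), so the result is \<integral> F (1 - F) dN(t, a) with F = N(\<mu>, \<sigma>^2)
  and a = \<alpha>^2 + \<sigma>\<^sub>\<gamma>^2. Writing u = t - W with W ~ N(0, a) and
  F u (1 - F u) = P(X\<^sub>1 \<le> u) P(X\<^sub>2 > u) for independent X\<^sub>i ~ N(\<mu>, \<sigma>^2), this is the probability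
  that (X\<^sub>1 - t + W, t - X\<^sub>2 - W) lies in the negative quadrant; that vector is Gaussian with
  mean (\<mu> - t, t - \<mu>), variances \<sigma>^2 + a and covariance -a.
*)

lemma gauss_minus: "gauss m (- s) = gauss m s"
  by (simp add: gauss_def normal_density_def)

lemma sets_gauss [simp, measurable_cong]: "sets (gauss m s) = sets borel"
  by (simp add: gauss_def)

lemma prob_space_gauss: "s \<noteq> 0 \<Longrightarrow> prob_space (gauss m s)"
  using prob_space_normal_density[of "\<bar>s\<bar>" m]
  by (cases "s > 0") (auto simp: gauss_def normal_density_def)

lemma real_distribution_gauss: "s \<noteq> 0 \<Longrightarrow> real_distribution (gauss m s)"
  by (simp add: real_distribution_def real_distribution_axioms_def prob_space_gauss)

lemma nn_integral_gauss:
  "f \<in> borel_measurable borel \<Longrightarrow>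
    (\<integral>\<^sup>+y. f y \<partial>gauss m s) = (\<integral>\<^sup>+y. ennreal (normal_density m s y) * f y \<partial>lborel)"
  unfolding gauss_def by (subst nn_integral_density) auto

lemma nn_integral_gauss_affine:
  assumes s: "s \<noteq> 0" and [measurable]: "f \<in> borel_measurable borel"
  shows "(\<integral>\<^sup>+y. f y \<partial>gauss m s) = (\<integral>\<^sup>+x. f (m + s * x) \<partial>gauss 0 1)"
proof -
  have std: "\<bar>s\<bar> * normal_density m s (m + s * x) = normal_density 0 1 x" for x
    using s by (simp add: normal_density_def real_sqrt_mult field_simps power2_eq_square real_sqrt_abs2)
  have "(\<integral>\<^sup>+y. f y \<partial>gauss m s) = (\<integral>\<^sup>+y. ennreal (normal_density m s y) * f y \<partial>lborel)"
    by (rule nn_integral_gauss) simp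
  also have "\<dots> = ennreal \<bar>s\<bar> * (\<integral>\<^sup>+x. ennreal (normal_density m s (m + s * x)) * f (m + s * x) \<partial>lborel)"
    using s by (intro nn_integral_real_affine) auto
  also have "\<dots> = (\<integral>\<^sup>+x. ennreal (normal_density 0 1 x) * f (m + s * x) \<partial>lborel)"
    by (subst nn_integral_cmult[symmetric])
       (auto simp: mult.assoc[symmetric] ennreal_mult'[symmetric] std intro!: nn_integral_cong)
  also have "\<dots> = (\<integral>\<^sup>+x. f (m + s * x) \<partial>gauss 0 1)"
    by (rule nn_integral_gauss[symmetric]) simp
  finally show ?thesis .
qed

lemma emeasure_gauss_affine:
  assumes "s \<noteq> 0" and [measurable]: "A \<in> sets borel"
  shows "emeasure (gauss m s) A = emeasure (gauss 0 1) {x. m + s * x \<in> A}"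
proof -
  have "emeasure (gauss m s) A = (\<integral>\<^sup>+y. indicator A y \<partial>gauss m s)"
    by simp
  also have "\<dots> = (\<integral>\<^sup>+x. indicator A (m + s * x) \<partial>gauss 0 1)"
    using assms by (intro nn_integral_gauss_affine) auto
  also have "\<dots> = (\<integral>\<^sup>+x. indicator {x. m + s * x \<in> A} x \<partial>gauss 0 1)"
    by (simp add: indicator_def)
  also have "\<dots> = emeasure (gauss 0 1) {x. m + s * x \<in> A}"
    by (rule nn_integral_indicator) measurable
  finally show ?thesis .
qed

lemma emeasure_gauss_singleton [simp]: "emeasure (gauss m s) {c} = 0"
proof -
  have "emeasure (gauss m s) {c} = (\<integral>\<^sup>+x. ennreal (normal_density m s c) * indicator {c} x \<partial>lborel)"
    unfolding gauss_def
    by (subst emeasure_density) (auto simp: indicator_def intro!: nn_integral_cong)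
  then show ?thesis
    by simp
qed

lemma
  assumes "s > 0"
  shows emeasure_gauss_atMost: "emeasure (gauss m s) {..u} = emeasure (gauss 0 1) {..(u - m) / s}"
    and emeasure_gauss_greaterThan: "emeasure (gauss m s) {u<..} = emeasure (gauss 0 1) {(u - m) / s<..}"
proof -
  have "{x. m + s * x \<in> {..u}} = {..(u - m) / s}" "{x. m + s * x \<in> {u<..}} = {(u - m) / s<..}"
    using assms by (auto simp: field_simps)
  then show "emeasure (gauss m s) {..u} = emeasure (gauss 0 1) {..(u - m) / s}"
    and "emeasure (gauss m s) {u<..} = emeasure (gauss 0 1) {(u - m) / s<..}"
    using assms by (metis atMost_borel greaterThan_borel emeasure_gauss_affine less_irrefl)+
qed

lemma emeasure_std_gauss_atMost_reflect:
  "emeasure (gauss 0 1) {..y} = emeasure (gauss 0 1) {- y<..}"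
proof -
  have "emeasure (gauss 0 1) {..y} = emeasure (gauss 0 (- 1)) {..y}"
    by (simp only: gauss_minus)
  also have "\<dots> = emeasure (gauss 0 1) ({- y<..} \<union> {- y})"
    by (subst emeasure_gauss_affine) (auto intro!: arg_cong[where f = "emeasure _"])
  also have "\<dots> = emeasure (gauss 0 1) {- y<..}"
    by (subst plus_emeasure[symmetric]) auto
  finally show ?thesis .
qed

lemma measurable_normal_density [measurable (raw)]:
  assumes [measurable]: "f \<in> borel_measurable M" "g \<in> borel_measurable M" "h \<in> borel_measurable M"
  shows "(\<lambda>x. normal_density (f x) (g x) (h x)) \<in> borel_measurable M"
  unfolding normal_density_def by measurable

lemma nn_integral_normal_density_convolution:
  assumes "s1 > 0" and "s2 > 0"
  shows "(\<integral>\<^sup>+x. ennreal (normal_density 0 s1 x * normal_density t s2 (z - x)) \<partial>lborel)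
      = ennreal (normal_density t (sqrt (s1\<^sup>2 + s2\<^sup>2)) z)"
proof -
  have "normal_density t s2 (z - x) = normal_density 0 s2 ((z - t) - x)" for x
    by (simp add: normal_density_def algebra_simps)
  then have "(\<integral>\<^sup>+x. ennreal (normal_density 0 s1 x * normal_density t s2 (z - x)) \<partial>lborel)
      = (\<integral>\<^sup>+x. ennreal (normal_density 0 s2 ((z - t) - x) * normal_density 0 s1 x) \<partial>lborel)"
    by (simp add: mult.commute)
  also have "\<dots> = ennreal (normal_density 0 (sqrt (s2\<^sup>2 + s1\<^sup>2)) (z - t))"
    using conv_normal_density_zero_mean[OF assms(2,1)] by (simp add: fun_eq_iff)
  also have "\<dots> = ennreal (normal_density t (sqrt (s1\<^sup>2 + s2\<^sup>2)) z)"
    by (simp add: normal_density_def add.commute)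
  finally show ?thesis .
qed

lemma nn_integral_gauss_convolution:
  assumes "s1 > 0" and "s2 > 0" and [measurable]: "f \<in> borel_measurable borel"
  shows "(\<integral>\<^sup>+x. \<integral>\<^sup>+u. f (u + x) \<partial>gauss t s2 \<partial>gauss 0 s1)
    = (\<integral>\<^sup>+z. f z \<partial>gauss t (sqrt (s1\<^sup>2 + s2\<^sup>2)))"
proof -
  let ?p = "\<lambda>x. ennreal (normal_density 0 s1 x)" and ?q = "\<lambda>u. ennreal (normal_density t s2 u)"
  have "(\<integral>\<^sup>+x. \<integral>\<^sup>+u. f (u + x) \<partial>gauss t s2 \<partial>gauss 0 s1)
      = (\<integral>\<^sup>+x. ?p x * (\<integral>\<^sup>+u. ?q u * f (u + x) \<partial>lborel) \<partial>lborel)"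
    by (simp add: nn_integral_gauss)
  also have "\<dots> = (\<integral>\<^sup>+x. \<integral>\<^sup>+z. ?p x * (?q (z - x) * f z) \<partial>lborel \<partial>lborel)"
  proof (intro nn_integral_cong)
    fix x
    have "(\<integral>\<^sup>+u. ?q u * f (u + x) \<partial>lborel) = (\<integral>\<^sup>+z. ?q (z - x) * f z \<partial>lborel)"
      using nn_integral_real_affine[of "\<lambda>z. ?q (z - x) * f z" 1 x] by (simp add: add.commute)
    then show "?p x * (\<integral>\<^sup>+u. ?q u * f (u + x) \<partial>lborel) = (\<integral>\<^sup>+z. ?p x * (?q (z - x) * f z) \<partial>lborel)"
      by (simp add: nn_integral_cmult)
  qed
  also have "\<dots> = (\<integral>\<^sup>+z. (\<integral>\<^sup>+x. ennreal (normal_density 0 s1 x * normal_density t s2 (z - x)) \<partial>lborel)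
                      * f z \<partial>lborel)"
    by (subst lborel_pair.Fubini')
       (measurable, auto simp: ennreal_mult' mult.assoc nn_integral_multc[symmetric] intro!: nn_integral_cong)
  also have "\<dots> = (\<integral>\<^sup>+z. f z \<partial>gauss t (sqrt (s1\<^sup>2 + s2\<^sup>2)))"
    by (simp add: nn_integral_normal_density_convolution assms nn_integral_gauss)
  finally show ?thesis .
qed

lemma nn_integral_gauss_mixture:
  assumes "s > 0" and [measurable]: "f \<in> borel_measurable borel"
  shows "(\<integral>\<^sup>+v. \<integral>\<^sup>+u. f (u - \<alpha> * v) \<partial>gauss t s \<partial>gauss 0 1) = (\<integral>\<^sup>+z. f z \<partial>gauss t (sqrt (\<alpha>\<^sup>2 + s\<^sup>2)))"
proof (cases "\<alpha> = 0")
  \<comment> \<open>split off because gauss 0 0 is the zero measure, so the convolution lemma does not apply\<close>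
  case True
  then show ?thesis
    using assms(1) prob_space.emeasure_space_1[OF prob_space_gauss]
    by simp
next
  case False
  define H where "H x = (\<integral>\<^sup>+u. f (u + x) \<partial>gauss t s)" for x
  have [measurable]: "H \<in> borel_measurable borel"
    unfolding H_def by (simp add: nn_integral_gauss)
  have "(\<integral>\<^sup>+v. \<integral>\<^sup>+u. f (u - \<alpha> * v) \<partial>gauss t s \<partial>gauss 0 1) = (\<integral>\<^sup>+v. H (0 + (- \<alpha>) * v) \<partial>gauss 0 1)"
    by (simp add: H_def)
  also have "\<dots> = (\<integral>\<^sup>+x. H x \<partial>gauss 0 \<bar>\<alpha>\<bar>)"
    using False by (subst nn_integral_gauss_affine[symmetric]) (auto simp: abs_if gauss_minus)
  also have "\<dots> = (\<integral>\<^sup>+z. f z \<partial>gauss t (sqrt (\<alpha>\<^sup>2 + s\<^sup>2)))"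
    unfolding H_def using False assms by (subst nn_integral_gauss_convolution) auto
  finally show ?thesis .
qed

definition cdf_spread :: "real measure \<Rightarrow> real \<Rightarrow> ennreal" where
  "cdf_spread M u = emeasure M {..u} * emeasure M {u<..}"

context real_distribution
begin

lemma emeasure_atMost_eq_cdf: "emeasure M {..u} = ennreal (cdf M u)"
  by (simp add: emeasure_eq_measure cdf_def)

lemma emeasure_greaterThan_eq_cdf: "emeasure M {u<..} = ennreal (1 - cdf M u)"
proof -
  have "{u<..} = space M - {..u}"
    by auto
  then show ?thesis
    using prob_compl[of "{..u}"] by (simp add: emeasure_eq_measure cdf_def)
qed

lemma cdf_spread_eq_cdf: "cdf_spread M u = ennreal (cdf M u * (1 - cdf M u))"
  using cdf_nonneg[of u] cdf_bounded_prob[of u]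
  by (simp add: cdf_spread_def emeasure_atMost_eq_cdf emeasure_greaterThan_eq_cdf ennreal_mult')

lemma cdf_spread_le_1: "cdf_spread M u \<le> 1"
  using cdf_nonneg[of u] cdf_bounded_prob[of u] by (simp add: cdf_spread_eq_cdf mult_le_one)

lemma borel_measurable_cdf: "cdf M \<in> borel_measurable borel"
  by (intro borel_measurable_mono) (simp add: mono_def cdf_nondecreasing)

lemma borel_measurable_cdf_spread: "cdf_spread M \<in> borel_measurable borel"
  using borel_measurable_cdf unfolding cdf_spread_eq_cdf[abs_def] by measurable

lemma nn_integral_CRPS_integrand:
  "(\<integral>\<^sup>+y. ennreal ((cdf M u - indicator {y..} u)\<^sup>2) \<partial>M) = cdf_spread M u"
proof -
  define F where "F = cdf M u"
  have F: "0 \<le> F" "F \<le> 1"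
    using cdf_nonneg cdf_bounded_prob unfolding F_def by auto
  have "(\<integral>\<^sup>+y. ennreal ((F - indicator {y..} u)\<^sup>2) \<partial>M)
      = (\<integral>\<^sup>+y. ennreal ((1 - F)\<^sup>2) * indicator {..u} y + ennreal (F\<^sup>2) * indicator {u<..} y \<partial>M)"
    by (intro nn_integral_cong) (auto simp: indicator_def power2_commute)
  also have "\<dots> = ennreal ((1 - F)\<^sup>2) * ennreal F + ennreal (F\<^sup>2) * ennreal (1 - F)"
    by (subst nn_integral_add)
       (auto simp: nn_integral_cmult_indicator emeasure_atMost_eq_cdf emeasure_greaterThan_eq_cdf F_def)
  also have "\<dots> = ennreal ((1 - F)\<^sup>2 * F + F\<^sup>2 * (1 - F))"
    using F by (simp add: ennreal_mult'[symmetric] ennreal_plus[symmetric] del: ennreal_plus)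
  also have "(1 - F)\<^sup>2 * F + F\<^sup>2 * (1 - F) = F * (1 - F)"
    by (simp add: power2_eq_square algebra_simps)
  finally show ?thesis
    by (simp add: F_def cdf_spread_eq_cdf)
qed

lemma expected_CRPS_density:
  assumes [measurable]: "g \<in> borel_measurable borel"
  shows "expected_CRPS (density lborel g) M = (\<integral>\<^sup>+u. g u * cdf_spread M u \<partial>lborel)"
proof -
  have [measurable]: "cdf M \<in> borel_measurable borel"
    by (rule borel_measurable_cdf)
  interpret pair_sigma_finite M lborel ..
  have "expected_CRPS (density lborel g) M
      = (\<integral>\<^sup>+y. \<integral>\<^sup>+u. g u * ennreal ((cdf M u - of_bool (y \<le> u))\<^sup>2) \<partial>lborel \<partial>M)"
    unfolding expected_CRPS_def CRPS_def atLeast_iff indicator_def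
    by (intro nn_integral_cong nn_integral_density) measurable
  also have "\<dots> = (\<integral>\<^sup>+u. \<integral>\<^sup>+y. g u * ennreal ((cdf M u - of_bool (y \<le> u))\<^sup>2) \<partial>M \<partial>lborel)"
    by (rule Fubini'[symmetric]) measurable
  also have "\<dots> = (\<integral>\<^sup>+u. g u * cdf_spread M u \<partial>lborel)"
    by (simp add: nn_integral_cmult nn_integral_CRPS_integrand[symmetric] indicator_def)
  finally show ?thesis .
qed

end

lemma borel_measurable_cdf_spread_gauss [measurable]:
  "s \<noteq> 0 \<Longrightarrow> cdf_spread (gauss m s) \<in> borel_measurable borel"
  by (rule real_distribution.borel_measurable_cdf_spread[OF real_distribution_gauss])

lemma cdf_spread_gauss:
  assumes "s > 0"
  shows "cdf_spread (gauss m s) u = cdf_spread (gauss 0 1) ((u - m) / s)"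
  unfolding cdf_spread_def
  by (simp only: emeasure_gauss_atMost[OF assms, of m u] emeasure_gauss_greaterThan[OF assms, of m u])

lemma nn_integral_pos_part_minus_max:
  assumes "sigma_finite_measure P" and sets_P [measurable_cong]: "sets P = sets borel"
  shows "(\<integral>\<^sup>+n'. \<integral>\<^sup>+n. ennreal (max 0 (n - max n' c)) \<partial>P \<partial>P)
    = (\<integral>\<^sup>+u. indicator {c..} u * cdf_spread P u \<partial>lborel)"
proof -
  interpret pair_sigma_finite P lborel
    using assms(1) by (simp add: pair_sigma_finite_def lborel.sigma_finite_measure_axioms)
  let ?H = "\<lambda>n' n u. of_bool (c \<le> u \<and> n' \<le> u \<and> u < n) :: ennreal"
  have "ennreal (max 0 (n - max n' c)) = (\<integral>\<^sup>+u. ?H n' n u \<partial>lborel)" for n n' :: real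
  proof -
    have "(\<integral>\<^sup>+u. ?H n' n u \<partial>lborel) = (\<integral>\<^sup>+u. indicator {max n' c..<n} u \<partial>lborel)"
      by (intro nn_integral_cong) (auto simp: indicator_def)
    then show ?thesis
      by (cases "max n' c \<le> n") (auto intro!: ennreal_neg)
  qed
  then have "(\<integral>\<^sup>+n'. \<integral>\<^sup>+n. ennreal (max 0 (n - max n' c)) \<partial>P \<partial>P)
      = (\<integral>\<^sup>+n'. \<integral>\<^sup>+n. \<integral>\<^sup>+u. ?H n' n u \<partial>lborel \<partial>P \<partial>P)"
    by simp
  also have "\<dots> = (\<integral>\<^sup>+n'. \<integral>\<^sup>+u. \<integral>\<^sup>+n. ?H n' n u \<partial>P \<partial>lborel \<partial>P)"
    by (intro nn_integral_cong Fubini'[symmetric]) measurable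
  also have "\<dots> = (\<integral>\<^sup>+u. \<integral>\<^sup>+n'. \<integral>\<^sup>+n. ?H n' n u \<partial>P \<partial>P \<partial>lborel)"
    by (intro Fubini'[symmetric]) measurable
  also have "\<dots> = (\<integral>\<^sup>+u. \<integral>\<^sup>+n'. \<integral>\<^sup>+n.
      indicator {c..} u * indicator {..u} n' * indicator {u<..} n \<partial>P \<partial>P \<partial>lborel)"
    by (intro nn_integral_cong) (auto simp: indicator_def)
  also have "\<dots> = (\<integral>\<^sup>+u. indicator {c..} u * cdf_spread P u \<partial>lborel)"
    by (intro nn_integral_cong)
       (simp add: sets_P cdf_spread_def nn_integral_cmult nn_integral_multc mult.assoc[symmetric])
  finally show ?thesis .
qed

lemma expected_CRPS_threshold_gauss:
  assumes s: "s > 0"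
  shows "expected_CRPS (density lborel (indicator {t..})) (gauss m s)
    = ennreal s * (\<integral>\<^sup>+n'. \<integral>\<^sup>+n. ennreal (max 0 (n - max n' ((t - m) / s))) \<partial>gauss 0 1 \<partial>gauss 0 1)"
proof -
  have "expected_CRPS (density lborel (indicator {t..})) (gauss m s)
      = (\<integral>\<^sup>+u. indicator {t..} u * cdf_spread (gauss m s) u \<partial>lborel)"
    using s by (intro real_distribution.expected_CRPS_density real_distribution_gauss) auto
  also have "\<dots> = ennreal s * (\<integral>\<^sup>+x. indicator {t..} (m + s * x) * cdf_spread (gauss m s) (m + s * x) \<partial>lborel)"
    using s by (subst nn_integral_real_affine[of _ s m]) auto
  also have "\<dots> = ennreal s * (\<integral>\<^sup>+x. indicator {(t - m) / s..} x * cdf_spread (gauss 0 1) x \<partial>lborel)"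
    using s by (auto simp: cdf_spread_gauss[OF s, of m] indicator_def field_simps intro!: nn_integral_cong)
  also have "\<dots> = ennreal s * (\<integral>\<^sup>+n'. \<integral>\<^sup>+n. ennreal (max 0 (n - max n' ((t - m) / s))) \<partial>gauss 0 1 \<partial>gauss 0 1)"
    using prob_space_imp_sigma_finite[OF prob_space_gauss]
    by (simp only: nn_integral_pos_part_minus_max sets_gauss one_neq_zero not_False_eq_True)
  finally show ?thesis .
qed

lemma expected_CRPS_threshold_mixture:
  assumes "\<sigma> > 0"
  shows "(\<integral>\<^sup>+v. expected_CRPS (density lborel (indicator {t..})) (gauss (\<mu> + \<alpha> * v) \<sigma>) \<partial>gauss 0 1)
    = ennreal \<sigma> * (\<integral>\<^sup>+v. \<integral>\<^sup>+n'. \<integral>\<^sup>+n. ennreal (max 0 (n - max n' ((t - \<mu> - \<alpha> * v) / \<sigma>)))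
                        \<partial>gauss 0 1 \<partial>gauss 0 1 \<partial>gauss 0 1)"
proof -
  interpret std: prob_space "gauss 0 1"
    using prob_space_gauss by simp
  have "(\<integral>\<^sup>+v. expected_CRPS (density lborel (indicator {t..})) (gauss (\<mu> + \<alpha> * v) \<sigma>) \<partial>gauss 0 1)
      = (\<integral>\<^sup>+v. ennreal \<sigma> * (\<integral>\<^sup>+n'. \<integral>\<^sup>+n. ennreal (max 0 (n - max n' ((t - \<mu> - \<alpha> * v) / \<sigma>)))
                        \<partial>gauss 0 1 \<partial>gauss 0 1) \<partial>gauss 0 1)"
    using expected_CRPS_threshold_gauss[OF assms] by (simp add: diff_diff_eq)
  also have "\<dots> = ennreal \<sigma> * (\<integral>\<^sup>+v. \<integral>\<^sup>+n'. \<integral>\<^sup>+n. ennreal (max 0 (n - max n' ((t - \<mu> - \<alpha> * v) / \<sigma>)))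
                        \<partial>gauss 0 1 \<partial>gauss 0 1 \<partial>gauss 0 1)"
    by (rule nn_integral_cmult) measurable
  finally show ?thesis .
qed

lemma gaussian_exponent_completion:
  fixes a b x y w :: real
  assumes "a > 0" "b > 0"
  shows "- w\<^sup>2 / (2 * a) - (x - w)\<^sup>2 / (2 * b) - (y + w)\<^sup>2 / (2 * b)
    = - ((b + a) * x\<^sup>2 + 2 * a * x * y + (b + a) * y\<^sup>2) / (2 * (b * (b + 2 * a)))
      - (w - a * (x - y) / (b + 2 * a))\<^sup>2 / (2 * (a * b / (b + 2 * a)))"
proof -
  have "b + 2 * a > 0"
    using assms by simp
  then show ?thesis
    using assms by (simp add: divide_simps power2_eq_square) algebra
qed

lemma bivariate_normal_density_negative_covariance:
  assumes "a > 0" and "b > 0"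
  shows "bivariate_normal_density m1 m2 (b + a) (- a) (b + a) (p1, p2)
    = exp (- ((b + a) * (p1 - m1)\<^sup>2 + 2 * a * (p1 - m1) * (p2 - m2) + (b + a) * (p2 - m2)\<^sup>2)
            / (2 * (b * (b + 2 * a))))
      / (2 * pi * sqrt (b * (b + 2 * a)))"
proof -
  have "(b + a) * (b + a) - (- a)\<^sup>2 = b * (b + 2 * a)"
    by (simp add: power2_eq_square algebra_simps)
  then show ?thesis
    unfolding bivariate_normal_density_def Let_def fst_conv snd_conv by simp
qed

lemma normal_mixture_normalizer:
  assumes "a > 0" and "b > 0"
  shows "1 / sqrt (2 * pi * a) * (1 / sqrt (2 * pi * b)) * (1 / sqrt (2 * pi * b))
    = 1 / (2 * pi * sqrt (b * (b + 2 * a))) * (1 / sqrt (2 * pi * (a * b / (b + 2 * a))))"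
proof -
  have "sqrt (2 * pi * a) * sqrt (2 * pi * b) * sqrt (2 * pi * b)
      = sqrt ((2 * pi)\<^sup>2 * (b * (b + 2 * a)) * (2 * pi * (a * b / (b + 2 * a))))"
    unfolding real_sqrt_mult[symmetric] using assms by (simp add: field_simps power2_eq_square)
  also have "\<dots> = 2 * pi * sqrt (b * (b + 2 * a)) * sqrt (2 * pi * (a * b / (b + 2 * a)))"
    using pi_gt_zero by (simp only: real_sqrt_mult real_sqrt_abs abs_of_pos mult_pos_pos zero_less_numeral)
  finally show ?thesis
    by (simp add: mult.assoc)
qed

lemma normal_density_mixture_factorization:
  assumes "\<sigma> > 0" and a: "a > 0"
  shows "normal_density 0 (sqrt a) w * normal_density (m1 + w) \<sigma> p1 * normal_density (m2 - w) \<sigma> p2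
    = bivariate_normal_density m1 m2 (\<sigma>\<^sup>2 + a) (- a) (\<sigma>\<^sup>2 + a) (p1, p2) *
      normal_density (a * ((p1 - m1) - (p2 - m2)) / (\<sigma>\<^sup>2 + 2 * a)) (sqrt (a * \<sigma>\<^sup>2 / (\<sigma>\<^sup>2 + 2 * a))) w"
proof -
  define b x y where "b = \<sigma>\<^sup>2" and "x = p1 - m1" and "y = p2 - m2"
  have b: "b > 0" and c: "b + 2 * a > 0"
    using assms by (simp_all add: b_def add_pos_pos)
  have "normal_density 0 (sqrt a) w * normal_density (m1 + w) \<sigma> p1 * normal_density (m2 - w) \<sigma> p2
      = 1 / sqrt (2 * pi * a) * (1 / sqrt (2 * pi * b)) * (1 / sqrt (2 * pi * b))
        * exp (- w\<^sup>2 / (2 * a) - (x - w)\<^sup>2 / (2 * b) - (y + w)\<^sup>2 / (2 * b))"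
  proof -
    have "p1 - (m1 + w) = x - w" "p2 - (m2 - w) = y + w" "(sqrt a)\<^sup>2 = a"
      using a by (simp_all add: x_def y_def)
    then show ?thesis
      unfolding normal_density_def b_def[symmetric]
      by (simp add: exp_diff exp_minus field_simps mult_exp_exp[symmetric])
  qed
  also have "\<dots> = exp (- ((b + a) * x\<^sup>2 + 2 * a * x * y + (b + a) * y\<^sup>2) / (2 * (b * (b + 2 * a))))
        / (2 * pi * sqrt (b * (b + 2 * a)))
      * (1 / sqrt (2 * pi * (a * b / (b + 2 * a)))
        * exp (- (w - a * (x - y) / (b + 2 * a))\<^sup>2 / (2 * (a * b / (b + 2 * a)))))"
  proof -
    have "1 / P * (1 / Q) * exp (X - Z / B) = exp X / P * (1 / Q * exp (- Z / B))" for X P Q Z B :: real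
      by (simp add: exp_diff exp_minus divide_inverse)
    then show ?thesis
      unfolding gaussian_exponent_completion[OF a b] normal_mixture_normalizer[OF a b] .
  qed
  also have "\<dots> = bivariate_normal_density m1 m2 (\<sigma>\<^sup>2 + a) (- a) (\<sigma>\<^sup>2 + a) (p1, p2) *
      normal_density (a * ((p1 - m1) - (p2 - m2)) / (\<sigma>\<^sup>2 + 2 * a)) (sqrt (a * \<sigma>\<^sup>2 / (\<sigma>\<^sup>2 + 2 * a))) w"
    using a b c
    by (simp add: bivariate_normal_density_negative_covariance normal_density_def mult.commute
        flip: b_def x_def y_def)
  finally show ?thesis .
qed

lemma borel_measurable_bivariate_normal_density [measurable]:
  "bivariate_normal_density m1 m2 s11 s12 s22 \<in> borel_measurable (borel \<Otimes>\<^sub>M borel)"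
  unfolding bivariate_normal_density_def[abs_def] Let_def by measurable

lemma bivariate_normal_density_nonneg:
  "s12\<^sup>2 \<le> s11 * s22 \<Longrightarrow> 0 \<le> bivariate_normal_density m1 m2 s11 s12 s22 p"
  unfolding bivariate_normal_density_def Let_def by (intro divide_nonneg_nonneg) auto

lemma bivariate_normal_density_mixture:
  assumes "\<sigma> > 0" and "a > 0"
  shows "ennreal (bivariate_normal_density m1 m2 (\<sigma>\<^sup>2 + a) (- a) (\<sigma>\<^sup>2 + a) (p1, p2))
    = (\<integral>\<^sup>+w. ennreal (normal_density 0 (sqrt a) w * normal_density (m1 + w) \<sigma> p1
                        * normal_density (m2 - w) \<sigma> p2) \<partial>lborel)"
proof -
  have "(- a)\<^sup>2 \<le> (\<sigma>\<^sup>2 + a) * (\<sigma>\<^sup>2 + a)"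
    using assms by (simp add: power2_eq_square algebra_simps)
  moreover have "(\<integral>\<^sup>+w. ennreal (normal_density m s w) \<partial>lborel) = 1" if "s > 0" for m s :: real
    using that by (subst nn_integral_eq_integral) auto
  moreover have "sqrt (a * \<sigma>\<^sup>2 / (\<sigma>\<^sup>2 + 2 * a)) > 0"
    using assms by (simp add: add_pos_pos)
  ultimately show ?thesis
    unfolding normal_density_mixture_factorization[OF assms]
    by (simp add: ennreal_mult' bivariate_normal_density_nonneg nn_integral_cmult)
qed

lemma emeasure_bivariate_normal_Times:
  assumes "\<sigma> > 0" and "a > 0" and [measurable]: "A \<in> sets borel" "B \<in> sets borel"
  shows "emeasure (density (lborel \<Otimes>\<^sub>M lborel) (bivariate_normal_density m1 m2 (\<sigma>\<^sup>2 + a) (- a) (\<sigma>\<^sup>2 + a)))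
      (A \<times> B)
    = (\<integral>\<^sup>+w. ennreal (normal_density 0 (sqrt a) w)
          * (emeasure (gauss (m1 + w) \<sigma>) A * emeasure (gauss (m2 - w) \<sigma>) B) \<partial>lborel)"
proof -
  let ?b = "bivariate_normal_density m1 m2 (\<sigma>\<^sup>2 + a) (- a) (\<sigma>\<^sup>2 + a)"
  let ?\<phi> = "\<lambda>w. ennreal (normal_density 0 (sqrt a) w)"
  let ?G = "\<lambda>w p1 p2. ?\<phi> w * (ennreal (normal_density (m1 + w) \<sigma> p1) * indicator A p1)
                         * (ennreal (normal_density (m2 - w) \<sigma> p2) * indicator B p2)"
  have "emeasure (density (lborel \<Otimes>\<^sub>M lborel) ?b) (A \<times> B)
      = (\<integral>\<^sup>+p. ennreal (?b p) * indicator (A \<times> B) p \<partial>(lborel \<Otimes>\<^sub>M lborel))"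
    by (subst emeasure_density) auto
  also have "\<dots> = (\<integral>\<^sup>+p1. \<integral>\<^sup>+p2. ennreal (?b (p1, p2)) * indicator A p1 * indicator B p2 \<partial>lborel \<partial>lborel)"
    by (subst lborel.nn_integral_fst[symmetric]) (auto simp: indicator_times mult.assoc)
  also have "\<dots> = (\<integral>\<^sup>+p1. \<integral>\<^sup>+p2. \<integral>\<^sup>+w. ?G w p1 p2 \<partial>lborel \<partial>lborel \<partial>lborel)"
  proof (intro nn_integral_cong)
    fix p1 p2
    have "ennreal (?b (p1, p2)) * indicator A p1 * indicator B p2
        = (\<integral>\<^sup>+w. ennreal (normal_density 0 (sqrt a) w * normal_density (m1 + w) \<sigma> p1
                           * normal_density (m2 - w) \<sigma> p2) \<partial>lborel) * (indicator A p1 * indicator B p2)"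
      using assms(1,2) by (simp add: bivariate_normal_density_mixture mult.assoc)
    also have "\<dots> = (\<integral>\<^sup>+w. ?G w p1 p2 \<partial>lborel)"
      by (subst nn_integral_multc[symmetric]) (auto simp: ennreal_mult' mult_ac intro!: nn_integral_cong)
    finally show "ennreal (?b (p1, p2)) * indicator A p1 * indicator B p2 = (\<integral>\<^sup>+w. ?G w p1 p2 \<partial>lborel)" .
  qed
  also have "\<dots> = (\<integral>\<^sup>+w. \<integral>\<^sup>+p1. \<integral>\<^sup>+p2. ?G w p1 p2 \<partial>lborel \<partial>lborel \<partial>lborel)"
    by (subst lborel_pair.Fubini') (measurable, intro nn_integral_cong lborel_pair.Fubini', measurable)
  also have "\<dots> = (\<integral>\<^sup>+w. ?\<phi> w * (emeasure (gauss (m1 + w) \<sigma>) A * emeasure (gauss (m2 - w) \<sigma>) B) \<partial>lborel)"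
    by (intro nn_integral_cong)
       (simp add: gauss_def emeasure_density nn_integral_cmult nn_integral_multc, simp add: mult.assoc)
  finally show ?thesis .
qed

lemma bivariate_Phi_eq_nn_integral_cdf_spread:
  assumes \<sigma>: "\<sigma> > 0" and a: "a > 0"
  shows "ennreal (bivariate_Phi (0, 0) (\<mu> - t) (t - \<mu>) (\<sigma>\<^sup>2 + a) (- a) (\<sigma>\<^sup>2 + a))
    = (\<integral>\<^sup>+z. cdf_spread (gauss \<mu> \<sigma>) z \<partial>gauss t (sqrt a))"
proof -
  let ?N = "density (lborel \<Otimes>\<^sub>M lborel) (bivariate_normal_density (\<mu> - t) (t - \<mu>) (\<sigma>\<^sup>2 + a) (- a) (\<sigma>\<^sup>2 + a))"
  have spread: "emeasure (gauss (\<mu> - t + w) \<sigma>) {..0} * emeasure (gauss (t - \<mu> - w) \<sigma>) {..0}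
      = cdf_spread (gauss \<mu> \<sigma>) (t - w)" for w
  proof -
    define z where "z = (t - w - \<mu>) / \<sigma>"
    have "(0 - (\<mu> - t + w)) / \<sigma> = z" and "- ((0 - (t - \<mu> - w)) / \<sigma>) = z"
      by (simp_all add: z_def diff_divide_distrib)
    then have "emeasure (gauss (\<mu> - t + w) \<sigma>) {..0} = emeasure (gauss 0 1) {..z}"
      and "emeasure (gauss (t - \<mu> - w) \<sigma>) {..0} = emeasure (gauss 0 1) {z<..}"
      by (simp_all only: emeasure_gauss_atMost[OF \<sigma>] emeasure_std_gauss_atMost_reflect)
    moreover have "cdf_spread (gauss \<mu> \<sigma>) (t - w) = emeasure (gauss 0 1) {..z} * emeasure (gauss 0 1) {z<..}"
      unfolding cdf_spread_gauss[OF \<sigma>] by (simp only: cdf_spread_def z_def)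
    ultimately show ?thesis
      by simp
  qed
  have "emeasure ?N ({..0} \<times> {..0})
      = (\<integral>\<^sup>+w. ennreal (normal_density 0 (sqrt a) w) * cdf_spread (gauss \<mu> \<sigma>) (t - w) \<partial>lborel)"
    by (simp add: emeasure_bivariate_normal_Times[OF \<sigma> a] spread)
  also have "\<dots> = (\<integral>\<^sup>+w. cdf_spread (gauss \<mu> \<sigma>) (t - w) \<partial>gauss 0 (sqrt a))"
    using \<sigma> by (simp add: nn_integral_gauss)
  also have "\<dots> = (\<integral>\<^sup>+x. cdf_spread (gauss \<mu> \<sigma>) (t + (- sqrt a) * x) \<partial>gauss 0 1)"
    using \<sigma> a by (subst nn_integral_gauss_affine) auto
  also have "\<dots> = (\<integral>\<^sup>+z. cdf_spread (gauss \<mu> \<sigma>) z \<partial>gauss t (sqrt a))"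
    using \<sigma> a nn_integral_gauss_affine[of "- sqrt a" "cdf_spread (gauss \<mu> \<sigma>)" t]
    by (simp add: gauss_minus)
  finally have eq: "emeasure ?N ({..0} \<times> {..0})
      = (\<integral>\<^sup>+z. cdf_spread (gauss \<mu> \<sigma>) z \<partial>gauss t (sqrt a))" .
  have "(\<integral>\<^sup>+z. cdf_spread (gauss \<mu> \<sigma>) z \<partial>gauss t (sqrt a)) \<le> (\<integral>\<^sup>+z. 1 \<partial>gauss t (sqrt a))"
    using \<sigma> by (intro nn_integral_mono real_distribution.cdf_spread_le_1 real_distribution_gauss) simp
  also have "\<dots> = 1"
    using a prob_space.emeasure_space_1[OF prob_space_gauss] by simp
  finally have "emeasure ?N ({..0} \<times> {..0}) \<noteq> \<top>"
    unfolding eq by (auto simp: top_unique)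
  then show ?thesis
    unfolding bivariate_Phi_def fst_conv snd_conv eq[symmetric] by (simp add: emeasure_eq_ennreal_measure)
qed

lemma expected_CRPS_gaussian_weight_mixture:
  assumes \<sigma>: "\<sigma> > 0" and \<sigma>\<^sub>\<gamma>: "\<sigma>\<^sub>\<gamma> > 0"
  shows "(\<integral>\<^sup>+v. expected_CRPS (density lborel (\<lambda>u. ennreal (1 / \<sigma>\<^sub>\<gamma> * std_normal_density ((u - t) / \<sigma>\<^sub>\<gamma>))))
                (gauss (\<mu> + \<alpha> * v) \<sigma>) \<partial>gauss 0 1)
    = ennreal (bivariate_Phi (0, 0) (\<mu> - t) (t - \<mu>)
                (\<sigma>\<^sup>2 + \<alpha>\<^sup>2 + \<sigma>\<^sub>\<gamma>\<^sup>2) (- \<alpha>\<^sup>2 - \<sigma>\<^sub>\<gamma>\<^sup>2) (\<sigma>\<^sup>2 + \<alpha>\<^sup>2 + \<sigma>\<^sub>\<gamma>\<^sup>2))"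
proof -
  have weight: "1 / \<sigma>\<^sub>\<gamma> * std_normal_density ((u - t) / \<sigma>\<^sub>\<gamma>) = normal_density t \<sigma>\<^sub>\<gamma> u" for u
    using \<sigma>\<^sub>\<gamma> by (simp add: normal_density_def real_sqrt_mult power_divide field_simps)
  have "expected_CRPS (density lborel (\<lambda>u. ennreal (1 / \<sigma>\<^sub>\<gamma> * std_normal_density ((u - t) / \<sigma>\<^sub>\<gamma>))))
        (gauss (\<mu> + \<alpha> * v) \<sigma>)
      = (\<integral>\<^sup>+u. cdf_spread (gauss \<mu> \<sigma>) (u - \<alpha> * v) \<partial>gauss t \<sigma>\<^sub>\<gamma>)" for v
  proof -
    have "cdf_spread (gauss (\<mu> + \<alpha> * v) \<sigma>) u = cdf_spread (gauss \<mu> \<sigma>) (u - \<alpha> * v)" for u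
      by (simp only: cdf_spread_gauss[OF \<sigma>] diff_diff_eq add.commute)
    then show ?thesis
      using \<sigma> unfolding weight
      by (simp add: real_distribution.expected_CRPS_density[OF real_distribution_gauss] nn_integral_gauss)
  qed
  then have "(\<integral>\<^sup>+v. expected_CRPS (density lborel (\<lambda>u. ennreal (1 / \<sigma>\<^sub>\<gamma> * std_normal_density ((u - t) / \<sigma>\<^sub>\<gamma>))))
                (gauss (\<mu> + \<alpha> * v) \<sigma>) \<partial>gauss 0 1)
      = (\<integral>\<^sup>+v. \<integral>\<^sup>+u. cdf_spread (gauss \<mu> \<sigma>) (u - \<alpha> * v) \<partial>gauss t \<sigma>\<^sub>\<gamma> \<partial>gauss 0 1)"
    by simp
  also have "\<dots> = (\<integral>\<^sup>+z. cdf_spread (gauss \<mu> \<sigma>) z \<partial>gauss t (sqrt (\<alpha>\<^sup>2 + \<sigma>\<^sub>\<gamma>\<^sup>2)))"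
    using \<sigma> \<sigma>\<^sub>\<gamma> by (intro nn_integral_gauss_mixture) auto
  also have "\<dots> = ennreal (bivariate_Phi (0, 0) (\<mu> - t) (t - \<mu>)
                (\<sigma>\<^sup>2 + (\<alpha>\<^sup>2 + \<sigma>\<^sub>\<gamma>\<^sup>2)) (- (\<alpha>\<^sup>2 + \<sigma>\<^sub>\<gamma>\<^sup>2)) (\<sigma>\<^sup>2 + (\<alpha>\<^sup>2 + \<sigma>\<^sub>\<gamma>\<^sup>2)))"
    using \<sigma>\<^sub>\<gamma> by (intro bivariate_Phi_eq_nn_integral_cdf_spread[symmetric] \<sigma> add_nonneg_pos) auto
  finally show ?thesis
    by (simp add: add.assoc)
qed

theorem theorem3:
  fixes m\<^sub>n :: "'x \<Rightarrow> real" and k\<^sub>n :: "'x \<Rightarrow> 'x \<Rightarrow> real"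
    and \<tau>2 :: real and x x' :: 'x and t :: real
    and \<alpha> \<sigma> \<mu> :: real
  assumes noise: "\<tau>2 \<ge> 0"
    and var_pos: "k\<^sub>n x x + \<tau>2 > 0"
    and alpha_def: "\<alpha> = k\<^sub>n x x' / sqrt (k\<^sub>n x x + \<tau>2)"
    and sigma_def: "\<sigma>\<^sup>2 = k\<^sub>n x' x' - (k\<^sub>n x x')\<^sup>2 / (k\<^sub>n x x + \<tau>2)"
    and sigma_pos: "\<sigma> > 0"
    and mu_def: "\<mu> = m\<^sub>n x'"
  shows
    "((\<integral>\<^sup>+ v. expected_CRPS (density lborel (\<lambda>u. indicator {t..} u))
                 (gauss (\<mu> + \<alpha> * v) \<sigma>) \<partial>gauss 0 1)
       = ennreal \<sigma> *
         (\<integral>\<^sup>+ v. \<integral>\<^sup>+ n'. \<integral>\<^sup>+ n. ennreal (max 0 (n - max n' ((t - \<mu> - \<alpha> * v) / \<sigma>)))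
              \<partial>gauss 0 1 \<partial>gauss 0 1 \<partial>gauss 0 1))
     \<and> (\<forall>\<sigma>\<^sub>\<gamma> > 0.
       (\<integral>\<^sup>+ v. expected_CRPS
                   (density lborel (\<lambda>u. ennreal (1 / \<sigma>\<^sub>\<gamma> * std_normal_density ((u - t) / \<sigma>\<^sub>\<gamma>))))
                   (gauss (\<mu> + \<alpha> * v) \<sigma>) \<partial>gauss 0 1)
       = ennreal (bivariate_Phi (0, 0) (\<mu> - t) (t - \<mu>)
                   (\<sigma>\<^sup>2 + \<alpha>\<^sup>2 + \<sigma>\<^sub>\<gamma>\<^sup>2) (- \<alpha>\<^sup>2 - \<sigma>\<^sub>\<gamma>\<^sup>2) (\<sigma>\<^sup>2 + \<alpha>\<^sup>2 + \<sigma>\<^sub>\<gamma>\<^sup>2)))"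
  using expected_CRPS_threshold_mixture[OF sigma_pos] expected_CRPS_gaussian_weight_mixture[OF sigma_pos]
  by blast

end
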